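(* Let $P=(P_1,\dots,P_n)$ be a probability vector, let $\Delta>0$, and let $\gamma>0$ and $\delta>0$ satisfy $$\sum_{i=1}^n\min(\delta,\gamma P_i)=1\qquad\text{and}\qquad \sum_{i:\ \gamma P_i<\delta}P_i=1-\Delta.$$ Define the probability vector $Q^*$ by $Q^*_i=\min(\delta,\gamma P_i)$. Then every $\lambda>0$ with $\alpha_\lambda(P\Vert Q^* )=1-\Delta$ satisfies $\beta_\lambda(P\Vert Q^* )\ge 1-\Delta$.
   Context: For probability vectors $P,Q$ on $\{1,\dots,n\}$ and $\lambda>0$: $\alpha_\lambda(P\Vert Q)=\sum_i\min(\lambda P_i,Q_i)$ (Precision) and $\beta_\lambda(P\Vert Q)=\sum_i\min(P_i,Q_i/\lambda)$ (Recall). The vector $Q^*$ is the paper's candidate minimizer of the "TruncR" loss $-\sum_i P_i\mathbf 1_{\{Q_i<\delta\}}\log Q_i$ under the quantile constraint $\sum_{i:Q_i<\delta}P_i=1-\Delta$. *)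

theory Defs
  imports Complex_Main
begin

definition prob_vec :: "nat \<Rightarrow> (nat \<Rightarrow> real) \<Rightarrow> bool" where
  "prob_vec n P \<longleftrightarrow> (\<forall>i<n. 0 \<le> P i) \<and> (\<Sum>i<n. P i) = 1"

definition precision :: "nat \<Rightarrow> real \<Rightarrow> (nat \<Rightarrow> real) \<Rightarrow> (nat \<Rightarrow> real) \<Rightarrow> real" where
  "precision n lam P Q = (\<Sum>i<n. min (lam * P i) (Q i))"

definition recall :: "nat \<Rightarrow> real \<Rightarrow> (nat \<Rightarrow> real) \<Rightarrow> (nat \<Rightarrow> real) \<Rightarrow> real" where
  "recall n lam P Q = (\<Sum>i<n. min (P i) (Q i / lam))"

end

theory Submission
  imports Defs
begin

text \<open>Since \<open>min (P i) (Q i / \<lambda>) = min (\<lambda> * P i) (Q i) / \<lambda>\<close>, recall is precision divided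
  by \<open>\<lambda>\<close>, so for \<open>\<Delta> < 1\<close> it suffices to show \<open>\<lambda> \<le> 1\<close>. For \<open>\<lambda> > 1\<close> the precision of \<open>Q\<^sup>*\<close> exceeds
  \<open>1 - \<Delta>\<close>: if \<open>\<gamma> \<le> 1\<close> then \<open>Q\<^sup>* \<le> \<lambda> P\<close> and the precision is the full mass 1 of \<open>Q\<^sup>*\<close>;
  if \<open>\<gamma> > 1\<close> then on the set where \<open>Q\<^sup>* = \<gamma> P\<close>, which carries \<open>P\<close>-mass \<open>1 - \<Delta>\<close>, the
  precision already collects \<open>min \<lambda> \<gamma>\<close> times that mass.\<close>

lemma recall_eq_precision_div:
  assumes "lam > 0"
  shows "recall n lam P Q = precision n lam P Q / lam"
  unfolding recall_def precision_def sum_divide_distrib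
  by (rule sum.cong) (use assms in \<open>auto simp: min_def field_simps\<close>)

lemma recall_nonneg:
  assumes "\<forall>i<n. 0 \<le> P i" and "\<forall>i<n. 0 \<le> Q i" and "lam > 0"
  shows "0 \<le> recall n lam P Q"
  unfolding recall_def using assms by (intro sum_nonneg) auto

lemma precision_eq_sum_right:
  assumes "\<forall>i<n. Q i \<le> lam * P i"
  shows "precision n lam P Q = (\<Sum>i<n. Q i)"
  unfolding precision_def using assms by (intro sum.cong) auto

lemma precision_ge_scaled_sum:
  assumes "A \<subseteq> {..<n}" and "\<forall>i<n. 0 \<le> P i" and "\<forall>i<n. 0 \<le> Q i"
    and "0 \<le> lam" and "c \<le> lam" and "\<forall>i\<in>A. c * P i \<le> Q i"
  shows "c * (\<Sum>i\<in>A. P i) \<le> precision n lam P Q"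
proof -
  have "c * P i \<le> min (lam * P i) (Q i)" if "i \<in> A" for i
    using that assms mult_right_mono[of c lam "P i"] by auto
  then have "c * (\<Sum>i\<in>A. P i) \<le> (\<Sum>i\<in>A. min (lam * P i) (Q i))"
    by (simp add: sum_distrib_left sum_mono)
  also have "\<dots> \<le> (\<Sum>i<n. min (lam * P i) (Q i))"
    using assms by (intro sum_mono2) auto
  finally show ?thesis unfolding precision_def .
qed

lemma precision_truncated_gt:
  fixes P :: "nat \<Rightarrow> real" and \<Delta> \<gamma> \<delta> lam :: real
  defines "Q \<equiv> \<lambda>i. min \<delta> (\<gamma> * P i)"
  assumes P_nonneg: "\<forall>i<n. 0 \<le> P i"
    and "\<Delta> > 0" and "\<Delta> < 1" and "\<gamma> > 0" and "\<delta> > 0"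
    and "(\<Sum>i<n. Q i) = 1"
    and untruncated_mass: "(\<Sum>i\<in>{i. i < n \<and> \<gamma> * P i < \<delta>}. P i) = 1 - \<Delta>"
    and "lam > 1"
  shows "precision n lam P Q > 1 - \<Delta>"
proof (cases "\<gamma> \<le> 1")
  case True
  have "\<gamma> * P i \<le> lam * P i" if "i < n" for i
    using that P_nonneg \<open>lam > 1\<close> True by (intro mult_right_mono) auto
  then have "precision n lam P Q = 1"
    using \<open>(\<Sum>i<n. Q i) = 1\<close>
    by (subst precision_eq_sum_right) (auto simp: Q_def min_le_iff_disj)
  then show ?thesis using \<open>\<Delta> > 0\<close> by simp
next
  case False
  have "min lam \<gamma> * (1 - \<Delta>) \<le> precision n lam P Q"
    unfolding untruncated_mass[symmetric]
    using P_nonneg \<open>\<gamma> > 0\<close> \<open>\<delta> > 0\<close> \<open>lam > 1\<close>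
    by (intro precision_ge_scaled_sum) (auto simp: Q_def intro: mult_right_mono)
  moreover have "1 - \<Delta> < min lam \<gamma> * (1 - \<Delta>)"
    using False \<open>lam > 1\<close> \<open>\<Delta> < 1\<close> by simp
  ultimately show ?thesis by linarith
qed

theorem propositionB3:
  fixes n :: nat and P :: "nat \<Rightarrow> real" and \<Delta> \<gamma> \<delta> lam :: real
  assumes "prob_vec n P"
    and "\<Delta> > 0" and "\<gamma> > 0" and "\<delta> > 0"
    and "(\<Sum>i<n. min \<delta> (\<gamma> * P i)) = 1"
    and "(\<Sum>i\<in>{i. i < n \<and> \<gamma> * P i < \<delta>}. P i) = 1 - \<Delta>"
    and "lam > 0"
    and "precision n lam P (\<lambda>i. min \<delta> (\<gamma> * P i)) = 1 - \<Delta>"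
  shows "recall n lam P (\<lambda>i. min \<delta> (\<gamma> * P i)) \<ge> 1 - \<Delta>"
proof (cases "\<Delta> < 1")
  case True
  have "lam \<le> 1"
    using precision_truncated_gt[of n P \<Delta> \<gamma> \<delta> lam] assms True
    by (force simp: prob_vec_def)
  then have "1 - \<Delta> \<le> (1 - \<Delta>) / lam"
    using \<open>lam > 0\<close> True by (simp add: le_divide_eq)
  then show ?thesis
    using assms(7,8) by (simp add: recall_eq_precision_div)
next
  case False
  have "0 \<le> recall n lam P (\<lambda>i. min \<delta> (\<gamma> * P i))"
    using assms(1,3,4,7) by (intro recall_nonneg) (auto simp: prob_vec_def)
  then show ?thesis using False by linarith
qed

end
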